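(* Let $C(n)$ be the number of distinct nonempty words $\omega$ such that $\omega\omega\omega$ is a factor of $\mathbb{T}[1,n]$. Then $C(t_m)=0$ for $m\leq6$, and for $m\geq7$, $C(t_m)=\frac{t_{m-5}+t_{m-6}-m+3}{2}$.
   Context: The Tribonacci sequence $\mathbb{T}=x_1x_2x_3\cdots$ is the fixed point (infinite word starting with $a$) of the substitution $\sigma(a)=ab$, $\sigma(b)=ac$, $\sigma(c)=a$ over $\{a,b,c\}$. For $n\ge1$, $\mathbb{T}[1,n]=x_1\cdots x_n$ is its prefix of length $n$. The Tribonacci numbers are $t_m=|\sigma^m(a)|$ for $m\ge0$, with $t_{-2}=0$, $t_{-1}=1$; thus $t_0=1,t_1=2,t_2=4$ and $t_m=t_{m-1}+t_{m-2}+t_{m-3}$. *)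

theory Defs
  imports Complex_Main "HOL-Library.Sublist"
begin

datatype letter = A | B | C

fun sigma1 :: "letter \<Rightarrow> letter list" where
  "sigma1 A = [A, B]"
| "sigma1 B = [A, C]"
| "sigma1 C = [A]"

definition sigma :: "letter list \<Rightarrow> letter list" where
  "sigma w = concat (map sigma1 w)"

definition trib :: "nat \<Rightarrow> nat" where
  "trib m = length ((sigma ^^ m) [A])"

text \<open>The infinite Tribonacci word, 0-indexed: position i is read off sigma^(i+1)(a),
  which has length > i and is a prefix of the fixed point.\<close>
definition tword :: "nat \<Rightarrow> letter" where
  "tword i = ((sigma ^^ Suc i) [A]) ! i"

definition tprefix :: "nat \<Rightarrow> letter list" where
  "tprefix n = map tword [0..<n]"

definition cube_count :: "nat \<Rightarrow> nat" where
  "cube_count n = card {w. w \<noteq> [] \<and> sublist (w @ w @ w) (tprefix n)}"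

end

theory Submission
  imports Defs
begin

text \<open>Every occurrence of \<open>a\<close> in \<open>T\<close> starts the image \<open>sigma(x\<^sub>j)\<close> of some letter, at
  position \<open>sigma_pos j = |sigma(T[1,j])|\<close>, and the letter after it determines \<open>x\<^sub>j\<close>. Hence
  \<open>sigma\<close> maps a maximal run of period \<open>q\<close> starting at \<open>j\<close> to a maximal run starting at
  \<open>sigma_pos j\<close>, and conversely every maximal run of period \<open>p \<ge> 2\<close> long enough to contain a
  cube is the image of a run of smaller period that is again long enough. Descending to period 1,
  where the only candidate is the run \<open>aa\<close> at position 6, the runs containing cubes are exactly
  the images of that run: the \<open>k\<close>-th has period \<open>t\<^sub>k\<close>, starts at \<open>s\<^sub>k = t\<^sub>k\<^sub>+\<^sub>3 - t\<^sub>k\<close>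
  and has \<open>N\<^sub>k + t\<^sub>k\<close> letters. Its \<open>N\<^sub>k - 2t\<^sub>k + 1\<close> windows of length \<open>3t\<^sub>k\<close> give pairwise
  distinct cubes when \<open>k \<ge> 3\<close>, and they lie in \<open>T[1,t\<^sub>m]\<close> iff \<open>k + 4 \<le> m\<close>. Counting letters
  under \<open>sigma\<close> gives \<open>N\<^sub>k\<^sub>+\<^sub>3 = N\<^sub>k\<^sub>+\<^sub>2 + N\<^sub>k\<^sub>+\<^sub>1 + N\<^sub>k + 3\<close>, whence
  \<open>2(N\<^sub>j\<^sub>+\<^sub>3 - 2t\<^sub>j\<^sub>+\<^sub>3 + 1) = t\<^sub>j\<^sub>+\<^sub>2 - t\<^sub>j - 1\<close>, and the sum over \<open>3 \<le> k \<le> m - 4\<close>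
  telescopes to the formula.\<close>

section \<open>The substitution and the Tribonacci numbers\<close>

lemma sigma_Nil [simp]: "sigma [] = []"
  by (simp add: sigma_def)

lemma sigma_Cons [simp]: "sigma (x # xs) = sigma1 x @ sigma xs"
  by (simp add: sigma_def)

lemma sigma_append [simp]: "sigma (xs @ ys) = sigma xs @ sigma ys"
  by (simp add: sigma_def)

lemma prefix_sigma: "prefix xs ys \<Longrightarrow> prefix (sigma xs) (sigma ys)"
  by (auto simp: prefix_def)

lemma length_sigma1: "length (sigma1 x) = (if x = C then 1 else 2)"
  by (cases x) auto

fun next_letter :: "letter \<Rightarrow> letter" where
  "next_letter A = B" | "next_letter B = C" | "next_letter C = A"

lemma next_letter_eq_iff [simp]: "next_letter x = next_letter y \<longleftrightarrow> x = y"
  by (cases x; cases y) auto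

lemma next_letter_eq_A_iff [simp]: "next_letter x = A \<longleftrightarrow> x = C"
  by (cases x) auto

lemma length_eq_count_letters:
  "length xs = count_list xs A + count_list xs B + count_list xs C"
proof (induction xs)
  case (Cons x xs)
  then show ?case by (cases x) auto
qed simp

lemma count_list_sigma1:
  "count_list (sigma1 x) A = 1"
  "count_list (sigma1 x) B = (if x = A then 1 else 0)"
  "count_list (sigma1 x) C = (if x = B then 1 else 0)"
  by (cases x; simp)+

lemma count_list_sigma:
  "count_list (sigma xs) A = length xs"
  "count_list (sigma xs) B = count_list xs A"
  "count_list (sigma xs) C = count_list xs B"
  by (induction xs) (simp_all add: count_list_sigma1)

abbreviation tblock :: "nat \<Rightarrow> letter list" where
  "tblock m \<equiv> (sigma ^^ m) [A]"

lemma length_tblock: "length (tblock m) = trib m"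
  by (simp add: trib_def)

lemma prefix_tblock: "a \<le> b \<Longrightarrow> prefix (tblock a) (tblock b)"
proof (induction b rule: dec_induct)
  case (step n)
  have "prefix (tblock n) (tblock (Suc n))"
    by (induction n) (simp_all add: prefix_sigma)
  with step.IH show ?case
    by (rule prefix_order.trans)
qed simp

lemma tblock_rec: "tblock (n + 3) = tblock (n + 2) @ tblock (n + 1) @ tblock n"
  by (induction n) (simp_all add: sigma_def numeral_eq_Suc)

lemma trib_rec: "trib (n + 3) = trib (n + 2) + trib (n + 1) + trib n"
  by (simp add: trib_def tblock_rec)

lemma trib_Suc_Suc_Suc: "trib (Suc (Suc (Suc n))) = trib (Suc (Suc n)) + trib (Suc n) + trib n"
  using trib_rec[of n] by (simp add: numeral_eq_Suc)

lemma trib_values: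
  "trib 0 = 1" "trib 1 = 2" "trib 2 = 4" "trib 3 = 7" "trib 4 = 13" "trib 5 = 24"
  by (simp_all add: trib_def sigma_def numeral_eq_Suc)

lemma trib_Suc_values: "trib (Suc 0) = 2" "trib (Suc (Suc 0)) = 4" "trib (Suc (Suc (Suc 0))) = 7"
  by (simp_all add: trib_def sigma_def)

lemma length_sigma: "length (sigma xs) = length xs + count_list xs A + count_list xs B"
  using length_eq_count_letters[of "sigma xs"] by (simp add: count_list_sigma)

lemma trib_less_Suc: "trib n < trib (Suc n)"
proof -
  have "prefix [A] (tblock n)"
    using prefix_tblock[of 0 n] by simp
  then have "0 < count_list (tblock n) A"
    by (auto simp: prefix_def)
  then show ?thesis
    by (simp add: trib_def length_sigma)
qed

lemma strict_mono_trib: "strict_mono trib"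
  by (simp add: strict_mono_Suc_iff trib_less_Suc)

lemma trib_ge: "n + 1 \<le> trib n"
proof (induction n)
  case (Suc n)
  then show ?case using trib_less_Suc[of n] by simp
qed (simp add: trib_def)

lemma trib_pos: "0 < trib n"
  using trib_ge[of n] by simp

lemma trib_add_2_ge: "trib j + 3 \<le> trib (j + 2)"
proof (cases j)
  case 0
  then show ?thesis by (simp add: trib_values trib_Suc_values)
next
  case (Suc i)
  then show ?thesis
    using trib_Suc_Suc_Suc[of i] trib_ge[of "Suc (Suc i)"] trib_pos[of i] by simp
qed

section \<open>The Tribonacci word as a fixed point\<close>

lemma nth_tblock_mono: "a \<le> b \<Longrightarrow> i < trib a \<Longrightarrow> tblock b ! i = tblock a ! i"
  using prefix_tblock[of a b] by (auto simp: prefix_def nth_append length_tblock)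

lemma tword_eq_nth_tblock: "i < trib m \<Longrightarrow> tword i = tblock m ! i"
  using nth_tblock_mono[of "Suc i" "max m (Suc i)" i] nth_tblock_mono[of m "max m (Suc i)" i]
    trib_ge[of "Suc i"] by (simp add: tword_def)

lemma tprefix_eq_take_tblock: "n \<le> trib m \<Longrightarrow> tprefix n = take n (tblock m)"
  by (auto simp: tprefix_def list_eq_iff_nth_eq tword_eq_nth_tblock length_tblock)

lemma length_tprefix [simp]: "length (tprefix n) = n"
  by (simp add: tprefix_def)

lemma nth_tprefix: "i < n \<Longrightarrow> tprefix n ! i = tword i"
  by (simp add: tprefix_def)

lemma tprefix_Suc: "tprefix (Suc n) = tprefix n @ [tword n]"
  by (simp add: tprefix_def)

definition sigma_pos :: "nat \<Rightarrow> nat" where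
  "sigma_pos j = length (sigma (tprefix j))"

lemma tprefix_sigma_pos: "tprefix (sigma_pos j) = sigma (tprefix j)"
proof -
  have "tprefix j = take j (tblock j)"
    using trib_ge[of j] by (intro tprefix_eq_take_tblock) simp
  then have "prefix (tprefix j) (tblock j)"
    by (simp add: take_is_prefix)
  then have pre: "prefix (sigma (tprefix j)) (tblock (Suc j))"
    by (simp add: prefix_sigma)
  then have "sigma_pos j \<le> trib (Suc j)"
    unfolding sigma_pos_def by (metis length_tblock prefix_length_le)
  then show ?thesis
    using pre by (auto simp: tprefix_eq_take_tblock sigma_pos_def prefix_def)
qed

lemma sigma_pos_0 [simp]: "sigma_pos 0 = 0"
  by (simp add: sigma_pos_def tprefix_def)

lemma sigma_pos_Suc: "sigma_pos (Suc j) = sigma_pos j + (if tword j = C then 1 else 2)"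
  by (simp add: sigma_pos_def tprefix_Suc length_sigma1)

lemma strict_mono_sigma_pos: "strict_mono sigma_pos"
  by (simp add: strict_mono_Suc_iff sigma_pos_Suc)

lemma sigma_pos_less_iff [simp]: "sigma_pos a < sigma_pos b \<longleftrightarrow> a < b"
  using strict_mono_sigma_pos strict_mono_less by blast

lemma sigma_pos_le_iff [simp]: "sigma_pos a \<le> sigma_pos b \<longleftrightarrow> a \<le> b"
  using strict_mono_sigma_pos strict_mono_less_eq by blast

lemma sigma_pos_add_ge: "sigma_pos a + b \<le> sigma_pos (a + b)"
  by (induction b) (auto simp: sigma_pos_Suc)

lemma tword_sigma_pos_add:
  assumes "l < length (sigma1 (tword j))"
  shows "tword (sigma_pos j + l) = sigma1 (tword j) ! l"
proof -
  have "tprefix (sigma_pos (Suc j)) = tprefix (sigma_pos j) @ sigma1 (tword j)"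
    by (simp add: tprefix_sigma_pos tprefix_Suc)
  then have "tprefix (sigma_pos (Suc j)) ! (sigma_pos j + l) = sigma1 (tword j) ! l"
    by (simp add: nth_append)
  moreover have "sigma_pos j + l < sigma_pos (Suc j)"
    using assms by (simp add: sigma_pos_Suc length_sigma1)
  ultimately show ?thesis
    by (simp add: nth_tprefix)
qed

lemma tword_sigma_pos [simp]: "tword (sigma_pos j) = A"
  using tword_sigma_pos_add[of 0 j] by (cases "tword j") auto

lemma tword_Suc_sigma_pos [simp]: "tword (Suc (sigma_pos j)) = next_letter (tword j)"
proof (cases "tword j = C")
  case True
  then have "Suc (sigma_pos j) = sigma_pos (Suc j)"
    by (simp add: sigma_pos_Suc)
  with True show ?thesis by simp
next
  case False
  then show ?thesis
    using tword_sigma_pos_add[of 1 j] by (cases "tword j") auto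
qed

lemma tword_before_sigma_pos: "tword (sigma_pos (Suc j) - 1) = next_letter (tword j)"
  by (cases "tword j = C") (auto simp: sigma_pos_Suc)

lemma sigma_pos_cover: "\<exists>j. sigma_pos j \<le> i \<and> i < sigma_pos (Suc j)"
proof (induction i)
  case 0
  show ?case by (intro exI[of _ 0]) (simp add: sigma_pos_Suc)
next
  case (Suc i)
  then obtain j where j: "sigma_pos j \<le> i" "i < sigma_pos (Suc j)" by blast
  show ?case
  proof (cases "Suc i = sigma_pos (Suc j)")
    case True
    then show ?thesis
      using sigma_pos_less_iff[of "Suc j" "Suc (Suc j)"] by (intro exI[of _ "Suc j"]) simp
  next
    case False
    with j show ?thesis by (intro exI[of _ j]) simp
  qed
qed

lemma tword_eq_A_iff: "tword i = A \<longleftrightarrow> (\<exists>j. i = sigma_pos j)"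
proof
  assume "tword i = A"
  obtain j where j: "sigma_pos j \<le> i" "i < sigma_pos (Suc j)"
    using sigma_pos_cover by blast
  show "\<exists>j. i = sigma_pos j"
  proof (cases "i = sigma_pos j")
    case False
    with j have "i = Suc (sigma_pos j)" "tword j \<noteq> C"
      by (auto simp: sigma_pos_Suc split: if_splits)
    with \<open>tword i = A\<close> show ?thesis by simp
  qed blast
qed auto

lemma tword_not_A:
  assumes "tword i \<noteq> A"
  shows "0 < i" "tword (i - 1) = A" "tword (Suc i) = A"
proof -
  obtain j where j: "sigma_pos j \<le> i" "i < sigma_pos (Suc j)"
    using sigma_pos_cover by blast
  have "i \<noteq> sigma_pos j"
    using assms by auto
  with j have "i = Suc (sigma_pos j)" "sigma_pos (Suc j) = Suc i"
    by (auto simp: sigma_pos_Suc split: if_splits)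
  then show "0 < i" "tword (i - 1) = A" "tword (Suc i) = A"
    by (metis diff_Suc_1 tword_sigma_pos zero_less_Suc)+
qed

lemma no_AAA: "\<not> (tword i = A \<and> tword (i + 1) = A \<and> tword (i + 2) = A)"
proof
  assume AAA: "tword i = A \<and> tword (i + 1) = A \<and> tword (i + 2) = A"
  then obtain j where j: "i = sigma_pos j"
    using tword_eq_A_iff by blast
  have "tword j = C"
    using AAA j by (cases "tword j") auto
  then have j1: "i + 1 = sigma_pos (Suc j)"
    using j by (simp add: sigma_pos_Suc)
  have "tword (Suc j) = C"
    using AAA j1 tword_Suc_sigma_pos[of "Suc j"] by (cases "tword (Suc j)") auto
  with \<open>tword j = C\<close> show False
    using tword_not_A(3)[of j] by simp
qed

lemma sigma_pos_add_2: "sigma_pos j + 3 \<le> sigma_pos (j + 2)"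
proof -
  have "\<not> (tword j = C \<and> tword (Suc j) = C)"
    using tword_not_A(3)[of j] by auto
  then show ?thesis
    by (auto simp: numeral_2_eq_2 sigma_pos_Suc)
qed

section \<open>Periods and maximal runs\<close>

definition tfactor :: "nat \<Rightarrow> nat \<Rightarrow> letter list" where
  "tfactor i n = map tword [i..<i + n]"

lemma length_tfactor [simp]: "length (tfactor i n) = n"
  by (simp add: tfactor_def)

lemma nth_tfactor: "l < n \<Longrightarrow> tfactor i n ! l = tword (i + l)"
  by (simp add: tfactor_def)

lemma tfactor_eq_iff: "tfactor i n = tfactor j n \<longleftrightarrow> (\<forall>l<n. tword (i + l) = tword (j + l))"
  by (auto simp: list_eq_iff_nth_eq nth_tfactor)

lemma tfactor_add: "tfactor i (a + b) = tfactor i a @ tfactor (i + a) b"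
proof -
  have "[i..<i + a + b] = [i..<i + a] @ [i + a..<i + a + b]"
    by (rule upt_add_eq_append) simp
  then show ?thesis
    by (simp add: tfactor_def add.assoc)
qed

lemma tprefix_add: "tprefix (a + b) = tprefix a @ tfactor a b"
  by (simp add: tprefix_def tfactor_def upt_add_eq_append[of 0 a])

lemma tfactor_sigma_pos:
  "sigma_pos (j + m) = sigma_pos j + length (sigma (tfactor j m))"
  "tfactor (sigma_pos j) (sigma_pos (j + m) - sigma_pos j) = sigma (tfactor j m)"
proof -
  have split: "tprefix (sigma_pos (j + m)) = tprefix (sigma_pos j) @ sigma (tfactor j m)"
    by (simp add: tprefix_sigma_pos tprefix_add)
  then show len: "sigma_pos (j + m) = sigma_pos j + length (sigma (tfactor j m))"
    by (metis length_append length_tprefix)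
  show "tfactor (sigma_pos j) (sigma_pos (j + m) - sigma_pos j) = sigma (tfactor j m)"
    using split tprefix_add[of "sigma_pos j" "sigma_pos (j + m) - sigma_pos j"] len by simp
qed

lemma tfactor_sigma_pos_append_A:
  "tfactor (sigma_pos j) (sigma_pos (j + m) - sigma_pos j + 1) = sigma (tfactor j m) @ [A]"
proof -
  have "tfactor (sigma_pos j) (sigma_pos (j + m) - sigma_pos j + 1)
      = tfactor (sigma_pos j) (sigma_pos (j + m) - sigma_pos j) @ tfactor (sigma_pos (j + m)) 1"
    using tfactor_add[of "sigma_pos j" "sigma_pos (j + m) - sigma_pos j" 1] by simp
  also have "tfactor (sigma_pos (j + m)) 1 = [A]"
    by (simp add: tfactor_def)
  finally show ?thesis
    by (simp only: tfactor_sigma_pos(2))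
qed

lemma tfactor_eq_sigma_pos:
  assumes "tfactor a L = tfactor b L"
  shows "sigma_pos (a + L) - sigma_pos a = sigma_pos (b + L) - sigma_pos b"
    and "tfactor (sigma_pos a) (sigma_pos (a + L) - sigma_pos a + 1)
       = tfactor (sigma_pos b) (sigma_pos (b + L) - sigma_pos b + 1)"
proof -
  show "sigma_pos (a + L) - sigma_pos a = sigma_pos (b + L) - sigma_pos b"
    using assms by (simp add: tfactor_sigma_pos(1))
  show "tfactor (sigma_pos a) (sigma_pos (a + L) - sigma_pos a + 1)
      = tfactor (sigma_pos b) (sigma_pos (b + L) - sigma_pos b + 1)"
    unfolding tfactor_sigma_pos_append_A using assms by simp
qed

text \<open>The periodic factor described by \<open>period_on i p n\<close> has length \<open>n + p\<close>, not \<open>n\<close>.\<close>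

definition period_on :: "nat \<Rightarrow> nat \<Rightarrow> nat \<Rightarrow> bool" where
  "period_on i p n \<longleftrightarrow> (\<forall>l<n. tword (i + l) = tword (i + l + p))"

lemma period_on_iff_tfactor: "period_on i p n \<longleftrightarrow> tfactor i n = tfactor (i + p) n"
  by (auto simp: period_on_def tfactor_eq_iff ac_simps)

lemma period_on_mono: "period_on i p n \<Longrightarrow> m \<le> n \<Longrightarrow> period_on i p m"
  by (auto simp: period_on_def)

lemma period_on_sigma:
  assumes "period_on j q m"
  shows "period_on (sigma_pos j) (sigma_pos (j + q) - sigma_pos j) (sigma_pos (j + m) - sigma_pos j + 1)"
    and "sigma_pos (j + m + q) = sigma_pos (j + m) + (sigma_pos (j + q) - sigma_pos j)"
proof -
  have eq: "tfactor j m = tfactor (j + q) m"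
    using assms period_on_iff_tfactor by blast
  have mono: "sigma_pos j \<le> sigma_pos (j + m)" "sigma_pos j \<le> sigma_pos (j + q)"
    "sigma_pos (j + q) \<le> sigma_pos (j + q + m)"
    by simp_all
  note len = tfactor_eq_sigma_pos(1)[OF eq] and img = tfactor_eq_sigma_pos(2)[OF eq]
  have "sigma_pos (j + q + m) = sigma_pos (j + m) + (sigma_pos (j + q) - sigma_pos j)"
    using len mono by linarith
  then show "sigma_pos (j + m + q) = sigma_pos (j + m) + (sigma_pos (j + q) - sigma_pos j)"
    by (simp add: ac_simps)
  show "period_on (sigma_pos j) (sigma_pos (j + q) - sigma_pos j) (sigma_pos (j + m) - sigma_pos j + 1)"
    unfolding period_on_iff_tfactor using img len mono by simp
qed

text \<open>The letter following an \<open>A\<close> at \<open>sigma_pos j\<close> determines \<open>tword j\<close>.\<close>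

lemma period_on_desubst:
  assumes per: "period_on (sigma_pos j) p n" and jq: "sigma_pos (j + q) = sigma_pos j + p"
  shows "sigma_pos (j + l) + 1 < sigma_pos j + n \<Longrightarrow>
    sigma_pos (j + l + q) = sigma_pos (j + l) + p \<and> tword (j + l) = tword (j + l + q)"
proof (induction l)
  case 0
  then have "tword (sigma_pos j + 1) = tword (sigma_pos j + 1 + p)"
    using per[unfolded period_on_def, rule_format, of 1] by simp
  then have "next_letter (tword j) = next_letter (tword (j + q))"
    using jq[symmetric] by simp
  with jq show ?case
    by simp
next
  case (Suc l)
  have "sigma_pos (j + l) + 1 < sigma_pos j + n"
    using Suc.prems sigma_pos_less_iff[of "j + l" "j + Suc l"] by linarith
  with Suc.IH have IH: "sigma_pos (j + l + q) = sigma_pos (j + l) + p"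
    "tword (j + l) = tword (j + l + q)" by auto
  then have shift: "sigma_pos (j + Suc l + q) = sigma_pos (j + Suc l) + p"
    by (simp add: sigma_pos_Suc)
  define k where "k = sigma_pos (j + Suc l) - sigma_pos j"
  have k: "sigma_pos j + k = sigma_pos (j + Suc l)"
    unfolding k_def by simp
  then have "tword (sigma_pos j + (k + 1)) = tword (sigma_pos j + (k + 1) + p)"
    using Suc.prems per[unfolded period_on_def, rule_format, of "k + 1"] by simp
  then have "next_letter (tword (j + Suc l)) = next_letter (tword (j + Suc l + q))"
    using k shift[symmetric] by simp
  with shift show ?case
    by simp
qed

lemma A_pair_desubst:
  assumes "tword i = A" "tword (i + p) = A" "0 < p"
  obtains j q where "i = sigma_pos j" "sigma_pos (j + q) = sigma_pos j + p" "0 < q"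
proof -
  obtain j j' where j: "i = sigma_pos j" "i + p = sigma_pos j'"
    using assms(1,2) tword_eq_A_iff by blast
  with assms(3) have "sigma_pos j < sigma_pos j'"
    by linarith
  then have "j < j'"
    by simp
  with j show ?thesis
    by (intro that[of j "j' - j"]) simp_all
qed

lemma desubst_period_less:
  assumes "sigma_pos (j + q) = sigma_pos j + p" "2 \<le> p" "0 < q"
  shows "q < p"
proof (cases "q = 1")
  case False
  with assms(3) have "2 \<le> q"
    by simp
  have "sigma_pos j + 3 + (q - 2) \<le> sigma_pos (j + 2 + (q - 2))"
    using sigma_pos_add_2[of j] sigma_pos_add_ge[of "j + 2" "q - 2"] by linarith
  also have "j + 2 + (q - 2) = j + q"
    using \<open>2 \<le> q\<close> by simp
  finally show ?thesis
    using assms(1) by linarith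
qed (use assms in simp)

lemma not_periodic_suffix: "0 < p \<Longrightarrow> \<exists>l. tword (i + l) \<noteq> tword (i + l + p)"
proof (induction p arbitrary: i rule: less_induct)
  case (less p)
  show ?case
  proof (rule ccontr)
    assume "\<nexists>l. tword (i + l) \<noteq> tword (i + l + p)"
    then have per: "\<And>l. tword (i + l) = tword (i + l + p)"
      by blast
    obtain i' where i': "i \<le> i'" "tword i' = A"
      by (metis le_add2 le_refl plus_1_eq_Suc tword_not_A(3))
    have per': "\<And>l. tword (i' + l) = tword (i' + l + p)"
      using per[of "i' - i + _"] i' by simp
    show False
    proof (cases "p = 1")
      case True
      then show False
        using per'[of 0] per'[of 1] no_AAA[of i'] i' by (simp add: numeral_2_eq_2)
    next
      case False
      then have "2 \<le> p"
        using less.prems by simp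
      obtain j q where jq: "i' = sigma_pos j" "sigma_pos (j + q) = sigma_pos j + p" "0 < q"
        using A_pair_desubst[of i' p] per'[of 0] i' less.prems by auto
      have "tword (j + l) = tword (j + l + q)" for l
      proof -
        have "period_on (sigma_pos j) p (sigma_pos (j + l) + 2)"
          using per' jq by (simp add: period_on_def)
        then show ?thesis
          using period_on_desubst[OF _ jq(2), of "sigma_pos (j + l) + 2" l] by simp
      qed
      moreover have "q < p"
        using desubst_period_less[OF jq(2) \<open>2 \<le> p\<close> jq(3)] .
      ultimately show False
        using less.IH jq(3) by blast
    qed
  qed
qed

definition maximal_run :: "nat \<Rightarrow> nat \<Rightarrow> nat \<Rightarrow> bool" where
  "maximal_run i p n \<longleftrightarrow> 0 < p \<and> period_on i p n \<and> tword (i + n) \<noteq> tword (i + n + p) \<and>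
     (i = 0 \<or> tword (i - 1) \<noteq> tword (i - 1 + p))"

lemma first_mismatch:
  assumes "0 < p"
  obtains n where "period_on i p n" "tword (i + n) \<noteq> tword (i + n + p)"
proof
  let ?n = "LEAST l. tword (i + l) \<noteq> tword (i + l + p)"
  show "tword (i + ?n) \<noteq> tword (i + ?n + p)"
    using not_periodic_suffix[OF assms] by (rule LeastI_ex)
  show "period_on i p ?n"
    unfolding period_on_def using not_less_Least by blast
qed

lemma maximal_run_unique: "maximal_run i p n \<Longrightarrow> maximal_run i p n' \<Longrightarrow> n = n'"
  unfolding maximal_run_def period_on_def by (metis linorder_neqE_nat)

lemma maximal_run_sigma:
  assumes "maximal_run j q m"
  shows "maximal_run (sigma_pos j) (sigma_pos (j + q) - sigma_pos j) (sigma_pos (j + m) - sigma_pos j + 1)"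
proof -
  let ?p = "sigma_pos (j + q) - sigma_pos j" and ?i = "sigma_pos j"
  have q: "0 < q" and per: "period_on j q m" and right: "tword (j + m) \<noteq> tword (j + m + q)"
    and left: "j = 0 \<or> tword (j - 1) \<noteq> tword (j - 1 + q)"
    using assms by (auto simp: maximal_run_def)
  have le: "?i \<le> sigma_pos (j + m)"
    by simp
  have "tword (Suc (sigma_pos (j + m))) \<noteq> tword (Suc (sigma_pos (j + m + q)))"
    using right by simp
  then have right': "tword (?i + (sigma_pos (j + m) - ?i + 1)) \<noteq> tword (?i + (sigma_pos (j + m) - ?i + 1) + ?p)"
    using le period_on_sigma(2)[OF per] by simp
  have left': "?i = 0 \<or> tword (?i - 1) \<noteq> tword (?i - 1 + ?p)"
  proof (cases j)
    case (Suc j')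
    have "?i - 1 + ?p = sigma_pos (Suc (j' + q)) - 1"
      using Suc sigma_pos_less_iff[of 0 j] by simp
    with Suc left show ?thesis
      using tword_before_sigma_pos[of j'] tword_before_sigma_pos[of "j' + q"] by simp
  qed simp
  show ?thesis
    using q period_on_sigma(1)[OF per] right' left' by (simp add: maximal_run_def)
qed

lemma maximal_run_starts_with_A:
  assumes mr: "maximal_run i p n" and "0 < n"
  shows "tword i = A" "tword (i + p) = A"
proof -
  have eq: "tword i = tword (i + p)"
    using mr \<open>0 < n\<close> unfolding maximal_run_def period_on_def by (metis add_0_right)
  show "tword i = A"
  proof (rule ccontr)
    assume "tword i \<noteq> A"
    with eq have "0 < i" "tword (i - 1) = A" "tword (i + p - 1) = A"
      using tword_not_A(1,2)[of i] tword_not_A(2)[of "i + p"] by auto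
    with mr show False
      by (simp add: maximal_run_def)
  qed
  with eq show "tword (i + p) = A"
    by simp
qed

lemma maximal_run_desubst:
  assumes mr: "maximal_run i p n" and "2 \<le> p" "0 < n"
  obtains j q m where "i = sigma_pos j" "sigma_pos (j + q) = sigma_pos j + p" "q < p"
    "maximal_run j q m" "n = sigma_pos (j + m) - sigma_pos j + 1"
proof -
  have "tword i = A" "tword (i + p) = A" "0 < p"
    using maximal_run_starts_with_A[OF mr \<open>0 < n\<close>] \<open>2 \<le> p\<close> by simp_all
  then obtain j q where jq: "i = sigma_pos j" "sigma_pos (j + q) = sigma_pos j + p" "0 < q"
    by (rule A_pair_desubst)
  obtain m where per: "period_on j q m" and right: "tword (j + m) \<noteq> tword (j + m + q)"
    using first_mismatch[OF jq(3)] by blast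
  have left: "j = 0 \<or> tword (j - 1) \<noteq> tword (j - 1 + q)"
  proof (cases j)
    case (Suc j')
    have "sigma_pos (Suc (j' + q)) = i + p" "0 < i"
      using jq Suc sigma_pos_less_iff[of 0 j] by simp_all
    with mr jq Suc show ?thesis
      using tword_before_sigma_pos[of j'] tword_before_sigma_pos[of "j' + q"]
      by (auto simp: maximal_run_def)
  qed simp
  have mrj: "maximal_run j q m"
    using jq(3) per right left by (simp add: maximal_run_def)
  with jq have "maximal_run i p (sigma_pos (j + m) - sigma_pos j + 1)"
    using maximal_run_sigma[OF mrj] by simp
  with mr have "n = sigma_pos (j + m) - sigma_pos j + 1"
    by (rule maximal_run_unique)
  with jq mrj desubst_period_less[OF jq(2) \<open>2 \<le> p\<close> jq(3)] show ?thesis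
    using that by blast
qed

lemma desubst_run_long:
  assumes jq: "sigma_pos (j + q) = sigma_pos j + p" and per: "period_on j q m" and "2 \<le> p"
    and long: "2 * p \<le> sigma_pos (j + m) - sigma_pos j + 2"
  shows "2 * q \<le> m + 1"
proof (rule ccontr)
  assume short: "\<not> 2 * q \<le> m + 1"
  have le: "sigma_pos j \<le> sigma_pos (j + m)"
    by simp
  show False
  proof (cases "m < q")
    case True
    then have "sigma_pos (j + m) < sigma_pos (j + q)"
      by simp
    with jq le long \<open>2 \<le> p\<close> show False
      by linarith
  next
    case False
    then have "2 \<le> q" "m - q \<le> q - 2"
      using short by simp_all
    have "sigma_pos (j + (m - q) + q) = sigma_pos (j + (m - q)) + p"
      using period_on_sigma(2)[OF period_on_mono[OF per, of "m - q"]] jq by simp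
    then have "sigma_pos (j + m) = sigma_pos (j + (m - q)) + p"
      using False by simp
    moreover have "sigma_pos (j + (m - q)) \<le> sigma_pos (j + (q - 2))"
      using \<open>m - q \<le> q - 2\<close> by simp
    moreover have "j + (q - 2) + 2 = j + q"
      using \<open>2 \<le> q\<close> by simp
    then have "sigma_pos (j + (q - 2)) + 3 \<le> sigma_pos (j + q)"
      using sigma_pos_add_2[of "j + (q - 2)"] by (simp only:)
    ultimately show False
      using jq le long by linarith
  qed
qed

lemma cube_in_maximal_run:
  assumes cube: "period_on i p (2 * p)" and "0 < p"
  obtains i0 n0 where "maximal_run i0 p n0" "i0 \<le> i" "i + 2 * p \<le> i0 + n0"
proof -
  define P where "P x \<longleftrightarrow> x \<le> i \<and> period_on x p (i + 2 * p - x)" for x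
  define i0 where "i0 = (LEAST x. P x)"
  have "P i"
    using cube by (simp add: P_def)
  then have Pi0: "P i0"
    unfolding i0_def by (rule LeastI)
  then have "i0 \<le> i" and per: "period_on i0 p (i + 2 * p - i0)"
    by (simp_all add: P_def)
  have left: "i0 = 0 \<or> tword (i0 - 1) \<noteq> tword (i0 - 1 + p)"
  proof (rule ccontr)
    assume "\<not> ?thesis"
    then have "0 < i0" "tword (i0 - 1) = tword (i0 - 1 + p)"
      by auto
    have "P (i0 - 1)"
      unfolding P_def period_on_def
    proof (intro conjI allI impI)
      fix l
      assume "l < i + 2 * p - (i0 - 1)"
      with \<open>0 < i0\<close> \<open>tword (i0 - 1) = tword (i0 - 1 + p)\<close> per \<open>i0 \<le> i\<close>
      show "tword (i0 - 1 + l) = tword (i0 - 1 + l + p)"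
        unfolding period_on_def by (cases l) auto
    qed (use \<open>i0 \<le> i\<close> in simp)
    then have "i0 \<le> i0 - 1"
      unfolding i0_def by (rule Least_le)
    with \<open>0 < i0\<close> show False
      by simp
  qed
  obtain n0 where per0: "period_on i0 p n0" and right: "tword (i0 + n0) \<noteq> tword (i0 + n0 + p)"
    using first_mismatch[OF \<open>0 < p\<close>] by blast
  have "i + 2 * p - i0 \<le> n0"
    using per right unfolding period_on_def by (meson not_le)
  with \<open>i0 \<le> i\<close> \<open>0 < p\<close> per0 right left that show ?thesis
    by (simp add: maximal_run_def)
qed

section \<open>The runs containing cubes\<close>

lemma tblock_5: "tblock 5 = [A,B,A,C,A,B,A,A,B,A,C,A,B,A,B,A,C,A,B,A,A,B,A,C]"
  by (simp add: numeral_eq_Suc)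

lemma tword_less_24: "i < 24 \<Longrightarrow> tword i = [A,B,A,C,A,B,A,A,B,A,C,A,B,A,B,A,C,A,B,A,A,B,A,C] ! i"
  using tword_eq_nth_tblock[of i 5] by (simp add: tblock_5 trib_values)

lemma AA_position_ge_6:
  assumes "tword i = A" "tword (Suc i) = A"
  shows "6 \<le> i"
proof (rule ccontr)
  assume "\<not> 6 \<le> i"
  then consider "i = 0" | "i = 1" | "i = 2" | "i = 3" | "i = 4" | "i = 5"
    by linarith
  then show False
    using assms by cases (simp_all add: tword_less_24)
qed

lemma tfactor_tblock_sigma:
  assumes "tfactor j (trib k) = tblock k"
  shows "sigma_pos (j + trib k) = sigma_pos j + trib (Suc k)"
    and "tfactor (sigma_pos j) (trib (Suc k)) = tblock (Suc k)"
  using tfactor_sigma_pos[of j "trib k"] assms length_tblock[of "Suc k"] by simp_all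

text \<open>The maximal runs that contain cubes: the run \<open>aa\<close> at position 6 and its images under
  \<open>sigma\<close>, the \<open>k\<close>-th of which has period \<open>t\<^sub>k\<close>.\<close>

fun run_start :: "nat \<Rightarrow> nat" where
  "run_start 0 = 6"
| "run_start (Suc k) = sigma_pos (run_start k)"

fun run_length :: "nat \<Rightarrow> nat" where
  "run_length 0 = 1"
| "run_length (Suc k) = sigma_pos (run_start k + run_length k) - sigma_pos (run_start k) + 1"

declare run_start.simps(2) [simp del] run_length.simps(2) [simp del]

lemma maximal_run_family:
  "maximal_run (run_start k) (trib k) (run_length k) \<and> tfactor (run_start k) (trib k) = tblock k"
proof (induction k)
  case 0
  then show ?case
    by (simp add: maximal_run_def period_on_def tfactor_def tword_less_24 trib_values)
next
  case (Suc k)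
  then have "maximal_run (sigma_pos (run_start k)) (trib (Suc k)) (run_length (Suc k))"
    using maximal_run_sigma[of "run_start k" "trib k" "run_length k"] tfactor_tblock_sigma(1)
    by (simp add: run_length.simps)
  with Suc tfactor_tblock_sigma(2) show ?case
    by (simp add: run_start.simps)
qed

lemma period_on_run_start: "period_on (run_start k) (trib k) (run_length k)"
  using maximal_run_family[of k] by (simp add: maximal_run_def)

lemma run_image:
  assumes run: "tfactor j (run_length k + trib k) = tfactor (run_start k) (run_length k + trib k)"
  shows "sigma_pos (j + trib k) - sigma_pos j = trib (Suc k)"
    and "sigma_pos (j + run_length k) - sigma_pos j + 1 = run_length (Suc k)"
    and "tfactor (sigma_pos j) (run_length (Suc k) + trib (Suc k))
       = tfactor (run_start (Suc k)) (run_length (Suc k) + trib (Suc k))"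
proof -
  let ?s = "run_start k"
  have "tfactor j (trib k) = tfactor ?s (trib k)" "tfactor j (run_length k) = tfactor ?s (run_length k)"
    using run by (simp_all add: tfactor_eq_iff)
  note period = tfactor_eq_sigma_pos(1)[OF this(1)] and length = tfactor_eq_sigma_pos(1)[OF this(2)]
  have t: "sigma_pos (?s + trib k) = sigma_pos ?s + trib (Suc k)"
    using tfactor_tblock_sigma(1) maximal_run_family[of k] by blast
  with period show "sigma_pos (j + trib k) - sigma_pos j = trib (Suc k)"
    by simp
  show "sigma_pos (j + run_length k) - sigma_pos j + 1 = run_length (Suc k)"
    using length by (simp add: run_length.simps)
  have "sigma_pos ?s \<le> sigma_pos (?s + run_length k)"
    by simp
  with period_on_sigma(2)[OF period_on_run_start[of k]] t
  have "sigma_pos (?s + (run_length k + trib k)) - sigma_pos ?s + 1 = run_length (Suc k) + trib (Suc k)"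
    by (simp only: run_length.simps add.assoc)
  with tfactor_eq_sigma_pos[OF run]
  show "tfactor (sigma_pos j) (run_length (Suc k) + trib (Suc k))
      = tfactor (run_start (Suc k)) (run_length (Suc k) + trib (Suc k))"
    by (simp add: run_start.simps)
qed

lemma maximal_run_period_one:
  assumes mr: "maximal_run i 1 n" and "0 < n"
  shows "n = 1" "tword i = A" "tword (Suc i) = A" "6 \<le> i"
proof -
  show AA: "tword i = A" "tword (Suc i) = A"
    using maximal_run_starts_with_A[OF mr \<open>0 < n\<close>] by simp_all
  then show "6 \<le> i"
    by (rule AA_position_ge_6)
  show "n = 1"
  proof (rule ccontr)
    assume "n \<noteq> 1"
    with \<open>0 < n\<close> have "1 < n"
      by simp
    then have "tword (i + 1) = tword (i + 1 + 1)"
      using mr[unfolded maximal_run_def period_on_def] by blast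
    then have "tword (i + 1) = tword (i + 2)"
      by (simp add: numeral_2_eq_2)
    with AA no_AAA[of i] show False
      by simp
  qed
qed

lemma maximal_run_classification:
  "maximal_run i p n \<Longrightarrow> 2 * p \<le> n + 1 \<Longrightarrow>
   \<exists>k. p = trib k \<and> n = run_length k \<and> run_start k \<le> i \<and>
     tfactor i (run_length k + trib k) = tfactor (run_start k) (run_length k + trib k)"
proof (induction p arbitrary: i n rule: less_induct)
  case (less p)
  have mr: "maximal_run i p n" and long: "2 * p \<le> n + 1" by fact+
  then have "0 < p" "0 < n"
    by (auto simp: maximal_run_def)
  show ?case
  proof (cases "p = 1")
    case True
    note one = maximal_run_period_one[OF mr[unfolded True] \<open>0 < n\<close>]
    have "tfactor i (run_length 0 + trib 0) = tfactor (run_start 0) (run_length 0 + trib 0)"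
      using one by (simp add: tfactor_def trib_values numeral_2_eq_2 tword_less_24)
    with True one show ?thesis
      by (intro exI[of _ 0]) (simp add: trib_values)
  next
    case False
    with \<open>0 < p\<close> have "2 \<le> p"
      by simp
    obtain j q m where ij: "i = sigma_pos j" and jq: "sigma_pos (j + q) = sigma_pos j + p"
      and "q < p" and mrj: "maximal_run j q m" and nm: "n = sigma_pos (j + m) - sigma_pos j + 1"
      using maximal_run_desubst[OF mr \<open>2 \<le> p\<close> \<open>0 < n\<close>] by blast
    have "2 * q \<le> m + 1"
      using desubst_run_long[OF jq _ \<open>2 \<le> p\<close>] mrj long nm by (simp add: maximal_run_def)
    then obtain k where k: "q = trib k" "m = run_length k" "run_start k \<le> j"
      and run: "tfactor j (run_length k + trib k) = tfactor (run_start k) (run_length k + trib k)"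
      using less.IH[OF \<open>q < p\<close> mrj] by blast
    have "p = trib (Suc k)"
      using run_image(1)[OF run] jq k by simp
    moreover have "n = run_length (Suc k)"
      using run_image(2)[OF run] nm k by simp
    moreover have "run_start (Suc k) \<le> i"
      using ij k by (simp add: run_start.simps)
    ultimately show ?thesis
      using run_image(3)[OF run] ij by blast
  qed
qed

lemma cube_in_run:
  assumes cube: "period_on i p (2 * p)" and "0 < p"
  obtains k r where "p = trib k" "r + 2 * trib k \<le> run_length k" "run_start k + r \<le> i"
    "tfactor i p = tfactor (run_start k + r) p"
proof -
  obtain i0 n0 where mr: "maximal_run i0 p n0" and "i0 \<le> i" and cover: "i + 2 * p \<le> i0 + n0"
    using cube_in_maximal_run[OF assms] by blast
  then obtain k where k: "p = trib k" "n0 = run_length k" "run_start k \<le> i0"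
    and run: "tfactor i0 (run_length k + trib k) = tfactor (run_start k) (run_length k + trib k)"
    using maximal_run_classification[of i0 p n0] by force
  define r where "r = i - i0"
  have "tfactor i p = tfactor (run_start k + r) p"
    unfolding tfactor_eq_iff
  proof (intro allI impI)
    fix l
    assume "l < p"
    then have "r + l < run_length k + trib k"
      using cover k r_def \<open>i0 \<le> i\<close> by simp
    then have "tword (i0 + (r + l)) = tword (run_start k + (r + l))"
      using run unfolding tfactor_eq_iff by blast
    then show "tword (i + l) = tword (run_start k + r + l)"
      using r_def \<open>i0 \<le> i\<close> by (simp add: add.assoc)
  qed
  with k cover \<open>i0 \<le> i\<close> show ?thesis
    by (intro that[of k r]) (simp_all add: r_def)
qed

section \<open>Lengths of the runs\<close>

definition run_word :: "nat \<Rightarrow> letter list" where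
  "run_word k = tfactor (run_start k) (run_length k)"

lemma length_run_word: "length (run_word k) = run_length k"
  by (simp add: run_word_def)

lemma run_word_Suc: "run_word (Suc k) = sigma (run_word k) @ [A]"
  using tfactor_sigma_pos_append_A[of "run_start k" "run_length k"]
  by (simp add: run_word_def run_start.simps run_length.simps)

lemma count_run_word_Suc:
  "count_list (run_word (Suc k)) A = run_length k + 1"
  "count_list (run_word (Suc k)) B = count_list (run_word k) A"
  "count_list (run_word (Suc k)) C = count_list (run_word k) B"
  by (simp_all add: run_word_Suc count_list_sigma length_run_word)

lemma run_length_rec: "run_length (k + 3) = run_length (k + 2) + run_length (k + 1) + run_length k + 3"
proof -
  let ?w = "run_word (Suc (Suc (Suc k)))"
  have "run_length (Suc (Suc (Suc k))) = count_list ?w A + count_list ?w B + count_list ?w C"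
    using length_eq_count_letters[of ?w] by (simp only: length_run_word)
  then show ?thesis
    by (simp add: count_run_word_Suc numeral_eq_Suc)
qed

lemma run_length_values:
  "run_length 0 = 1" "run_length 1 = 3" "run_length 2 = 7"
  "run_length 3 = 14" "run_length 4 = 27" "run_length 5 = 51" "run_length (Suc 0) = 3"
proof -
  have "run_word 0 = [A]"
    by (simp add: run_word_def tfactor_def tword_less_24)
  then have "run_word (Suc 0) = [A,B,A]" "run_word (Suc (Suc 0)) = [A,B,A,C,A,B,A]"
    using run_word_Suc[of 0] run_word_Suc[of "Suc 0"] by simp_all
  then have "run_length 0 = 1" "run_length (Suc 0) = 3" "run_length (Suc (Suc 0)) = 7"
    using length_run_word[of "Suc 0"] length_run_word[of "Suc (Suc 0)"] by simp_all
  then show "run_length 0 = 1" "run_length 1 = 3" "run_length 2 = 7"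
    "run_length 3 = 14" "run_length 4 = 27" "run_length 5 = 51" "run_length (Suc 0) = 3"
    using run_length_rec[of 0] run_length_rec[of 1] run_length_rec[of 2] by (simp_all add: numeral_eq_Suc)
qed

lemma run_length_closed_form: "2 * run_length (k + 3) + trib k + 3 = 4 * trib (k + 3) + trib (k + 2)"
proof (induction k rule: less_induct)
  case (less k)
  show ?case
  proof (cases "k < 3")
    case True
    then consider "k = 0" | "k = 1" | "k = 2"
      by linarith
    \<comment> \<open>without \<open>add_2_eq_Suc'\<close>, \<open>k + 2\<close> becomes \<open>Suc (Suc k)\<close> before \<open>k\<close> is instantiated\<close>
    then show ?thesis
      by cases (simp_all add: run_length_values trib_values trib_Suc_values del: add_2_eq_Suc')
  next
    case False
    then obtain j where j: "k = j + 3"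
      by (metis add.commute le_Suc_ex not_less)
    have "j + 1 + 3 = j + 3 + 1" "j + 2 + 3 = j + 3 + 2" "j + 1 + 2 = j + 3" "j + 2 + 2 = j + 3 + 1"
      by simp_all
    with less.IH[of j] less.IH[of "j + 1"] less.IH[of "j + 2"] j
      run_length_rec[of "j + 3"] trib_rec[of j] trib_rec[of "j + 3"] trib_rec[of "j + 2"]
    show ?thesis
      by (simp add: ac_simps)
  qed
qed

lemma run_length_bounds: "3 \<le> k \<Longrightarrow> 2 * trib k \<le> run_length k \<and> run_length k < 3 * trib k"
proof -
  assume "3 \<le> k"
  then obtain j where j: "k = j + 3"
    by (metis add.commute le_Suc_ex)
  have "trib j + 3 \<le> trib (j + 2)"
    by (rule trib_add_2_ge)
  moreover have "trib (j + 2) < trib (j + 3)"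
    using strict_mono_trib by (simp add: strict_mono_less)
  ultimately show ?thesis
    using run_length_closed_form[of j] j by simp
qed

lemma run_length_small: "k < 3 \<Longrightarrow> run_length k < 2 * trib k"
proof -
  assume "k < 3"
  then consider "k = 0" | "k = 1" | "k = 2"
    by linarith
  then show ?thesis
    by cases (simp_all add: run_length_values trib_values trib_Suc_values del: add_2_eq_Suc')
qed

lemma run_length_le: "run_length k \<le> trib (k + 2) + trib (k + 1)"
proof (cases "k < 3")
  case True
  then consider "k = 0" | "k = 1" | "k = 2"
    by linarith
  then show ?thesis
    by cases (simp_all add: run_length_values trib_values trib_Suc_values del: add_2_eq_Suc')
next
  case False
  then obtain j where j: "k = Suc j"
    by (cases k) auto
  then have "trib (k + 2) = trib (k + 1) + trib k + trib j"
    using trib_Suc_Suc_Suc[of j] by simp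
  with False run_length_bounds[of k] trib_less_Suc[of k] show ?thesis
    by simp
qed

lemma run_start_add_trib: "run_start k + trib k = trib (k + 3)"
proof (induction k)
  case 0
  then show ?case
    by (simp add: trib_values)
next
  case (Suc k)
  let ?u = "tblock (k + 2) @ tblock (k + 1)"
  have len: "length ?u = run_start k"
    using Suc.IH trib_rec[of k] by (simp only: length_append length_tblock)
  have "run_start k \<le> trib (k + 3)"
    using Suc.IH by linarith
  then have "tprefix (run_start k) = take (run_start k) (tblock (k + 3))"
    by (rule tprefix_eq_take_tblock)
  also have "\<dots> = take (length ?u) (?u @ tblock k)"
    by (simp only: len tblock_rec append_assoc)
  also have "\<dots> = ?u"
    by (rule append_eq_conv_conj[THEN iffD1, OF refl, THEN conjunct1, symmetric])
  finally have "tprefix (run_start k) = ?u" .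
  then have "sigma_pos (run_start k) = length (tblock (Suc (k + 2)) @ tblock (Suc (k + 1)))"
    by (simp add: sigma_pos_def)
  then have "run_start (Suc k) = trib (Suc (k + 2)) + trib (Suc (k + 1))"
    by (simp only: run_start.simps length_append length_tblock)
  then have "run_start (Suc k) = trib (Suc (Suc (Suc k))) + trib (Suc (Suc k))"
    by simp
  moreover have "trib (Suc k + 3) = trib (Suc (Suc (Suc (Suc k))))"
    by (rule arg_cong[where f = trib]) simp
  ultimately show ?case
    using trib_Suc_Suc_Suc[of "Suc k"] by linarith
qed

section \<open>Counting the cubes\<close>

lemma trib_Suc_less_double: "3 \<le> k \<Longrightarrow> trib (Suc k) < 2 * trib k"
proof -
  assume "3 \<le> k"
  then obtain j where "k = j + 3"
    by (metis add.commute le_Suc_ex)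
  then show ?thesis
    using trib_rec[of j] trib_rec[of "Suc j"] trib_pos[of j] by (simp add: numeral_eq_Suc)
qed

lemma period_on_repeated_window:
  assumes per: "period_on x t N" and "0 < t" and "r < r'"
    and eq: "tfactor (x + r) t = tfactor (x + r') t"
  shows "period_on (x + r) (r' - r) (N + t - r')"
  unfolding period_on_def
proof (intro allI impI)
  fix l
  show "l < N + t - r' \<Longrightarrow> tword (x + r + l) = tword (x + r + l + (r' - r))"
  proof (induction l rule: less_induct)
    case (less l)
    show ?case
    proof (cases "l < t")
      case True
      then show ?thesis
        using eq \<open>r < r'\<close> unfolding tfactor_eq_iff by (simp add: ac_simps)
    next
      case False
      then have "r + l - t < N" "r' + l - t < N"
        using less.prems \<open>r < r'\<close> by linarith+
      then have "tword (x + (r + l - t)) = tword (x + (r + l - t) + t)"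
        "tword (x + (r' + l - t)) = tword (x + (r' + l - t) + t)"
        using per unfolding period_on_def by blast+
      moreover have "tword (x + r + (l - t)) = tword (x + r + (l - t) + (r' - r))"
        using less.IH[of "l - t"] less.prems False \<open>0 < t\<close> by simp
      moreover have "x + (r + l - t) + t = x + r + l" "x + (r' + l - t) + t = x + r + l + (r' - r)"
        "x + (r + l - t) = x + r + (l - t)" "x + (r' + l - t) = x + r + (l - t) + (r' - r)"
        using False \<open>r < r'\<close> by simp_all
      ultimately show ?thesis
        by simp
    qed
  qed
qed

lemma maximal_run_covers:
  assumes "maximal_run i p n" "i \<le> j" "j \<le> i + n" "period_on j p M"
  shows "j + M \<le> i + n"
proof (rule ccontr)
  assume "\<not> j + M \<le> i + n"
  with assms(3) have "i + n - j < M"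
    by linarith
  then have "tword (j + (i + n - j)) = tword (j + (i + n - j) + p)"
    using assms(4) unfolding period_on_def by blast
  with assms(1,3) show False
    by (simp add: maximal_run_def)
qed

lemma cube_roots_distinct:
  assumes "3 \<le> k" "r < r'" "r' + 2 * trib k \<le> run_length k"
  shows "tfactor (run_start k + r) (trib k) \<noteq> tfactor (run_start k + r') (trib k)"
proof
  assume eq: "tfactor (run_start k + r) (trib k) = tfactor (run_start k + r') (trib k)"
  let ?j = "run_start k + r" and ?d = "r' - r" and ?M = "run_length k + trib k - r'"
  have bounds: "2 * trib k \<le> run_length k" "run_length k < 3 * trib k"
    using run_length_bounds[OF assms(1)] by auto
  have per: "period_on ?j ?d ?M"
    using period_on_repeated_window[OF period_on_run_start trib_pos assms(2) eq] .
  have d: "0 < ?d" "?d < trib k" and M: "3 * trib k \<le> ?M"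
    using assms bounds by simp_all
  have "period_on ?j ?d (2 * ?d)"
    using period_on_mono[OF per] d M by simp
  then obtain i0 n0 where mr: "maximal_run i0 ?d n0" and "i0 \<le> ?j" and "?j + 2 * ?d \<le> i0 + n0"
    using cube_in_maximal_run d(1) by blast
  then have "?j + ?M \<le> i0 + n0"
    using maximal_run_covers[OF mr _ _ per] by simp
  with M \<open>i0 \<le> ?j\<close> have long: "3 * trib k \<le> n0"
    by linarith
  with d obtain k' where k': "?d = trib k'" "n0 = run_length k'"
    using maximal_run_classification[OF mr] by force
  with d have "k' < k"
    using strict_mono_trib by (simp add: strict_mono_less)
  then have "trib (k' + 2) \<le> trib (Suc k)" "trib (k' + 1) \<le> trib k"
    using strict_mono_trib by (simp_all add: strict_mono_less_eq)
  with run_length_le[of k'] k' long trib_Suc_less_double[OF assms(1)] show False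
    by linarith
qed

lemma tfactor_eq_take_drop: "i + l \<le> n \<Longrightarrow> tfactor i l = take l (drop i (tprefix n))"
  by (auto simp: list_eq_iff_nth_eq nth_tfactor nth_tprefix)

lemma sublist_tprefix_iff:
  "sublist w (tprefix n) \<longleftrightarrow> (\<exists>i. i + length w \<le> n \<and> w = tfactor i (length w))"
proof
  assume "sublist w (tprefix n)"
  then obtain ps ss where split: "tprefix n = ps @ w @ ss"
    by (auto simp: sublist_def)
  then have "length ps + length w \<le> n"
    using length_tprefix[of n] by simp
  moreover have "w = take (length w) (drop (length ps) (tprefix n))"
    using split by simp
  ultimately show "\<exists>i. i + length w \<le> n \<and> w = tfactor i (length w)"
    using tfactor_eq_take_drop by metis
next
  assume "\<exists>i. i + length w \<le> n \<and> w = tfactor i (length w)"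
  then obtain i where "w = take (length w) (drop i (tprefix n))"
    using tfactor_eq_take_drop by metis
  then show "sublist w (tprefix n)"
    using sublist_order.order.trans[OF sublist_take sublist_drop] by metis
qed

lemma cube_tfactor_iff:
  "tfactor i (3 * length u) = u @ u @ u \<longleftrightarrow>
    u = tfactor i (length u) \<and> period_on i (length u) (2 * length u)"
proof -
  let ?p = "length u"
  have "tfactor i (3 * ?p) = tfactor i ?p @ tfactor (i + ?p) ?p @ tfactor (i + ?p + ?p) ?p"
    using tfactor_add[of i ?p "?p + ?p"] tfactor_add[of "i + ?p" ?p ?p] by (simp add: numeral_3_eq_3)
  moreover have "period_on i ?p (2 * ?p) \<longleftrightarrow>
      tfactor i ?p = tfactor (i + ?p) ?p \<and> tfactor (i + ?p) ?p = tfactor (i + ?p + ?p) ?p"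
    using tfactor_add[of i ?p ?p] tfactor_add[of "i + ?p" ?p ?p]
    by (simp add: period_on_iff_tfactor mult_2)
  ultimately show ?thesis
    by auto
qed

text \<open>A cube of period \<open>t\<^sub>k\<close> occurring in \<open>T\<close> is determined by its shift \<open>r\<close> inside the
  \<open>k\<close>-th run (\<open>r + 2 t\<^sub>k \<le> N\<^sub>k\<close>); the whole run fits into \<open>T[1, t\<^sub>m]\<close> iff \<open>k + 4 \<le> m\<close>.\<close>

fun cube_root :: "nat \<times> nat \<Rightarrow> letter list" where
  "cube_root (k, r) = tfactor (run_start k + r) (trib k)"

definition cube_index :: "nat \<Rightarrow> (nat \<times> nat) set" where
  "cube_index m = (SIGMA k:{3..<m - 3}. {..run_length k - 2 * trib k})"

lemma mem_cube_index_iff: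
  "(k, r) \<in> cube_index m \<longleftrightarrow> 3 \<le> k \<and> k + 4 \<le> m \<and> r + 2 * trib k \<le> run_length k"
  using run_length_bounds[of k] by (auto simp: cube_index_def)

lemma cube_occurs_in_prefix:
  assumes "(k, r) \<in> cube_index m"
  shows "sublist (cube_root (k, r) @ cube_root (k, r) @ cube_root (k, r)) (tprefix (trib m))"
proof -
  let ?u = "cube_root (k, r)" and ?i = "run_start k + r"
  have k: "3 \<le> k" "k + 4 \<le> m" "r + 2 * trib k \<le> run_length k"
    using assms by (simp_all add: mem_cube_index_iff)
  have "period_on ?i (trib k) (2 * trib k)"
    using period_on_run_start[of k] k(3) by (auto simp: period_on_def add.assoc)
  then have cube: "?u @ ?u @ ?u = tfactor ?i (3 * length ?u)"
    using cube_tfactor_iff[of ?i ?u] by simp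
  have "k + 1 + 3 = k + 4" "k + 1 + 2 = k + 3" "k + 1 + 1 = k + 2"
    by simp_all
  then have "trib (k + 4) = trib (k + 3) + trib (k + 2) + trib (k + 1)"
    using trib_rec[of "k + 1"] by (simp only:)
  moreover have "trib (k + 4) \<le> trib m"
    using k(2) strict_mono_trib by (simp add: strict_mono_less_eq)
  ultimately have "?i + length (?u @ ?u @ ?u) \<le> trib m"
    using run_length_le[of k] run_start_add_trib[of k] k(3) by simp
  moreover have "length (?u @ ?u @ ?u) = 3 * length ?u"
    by simp
  ultimately show ?thesis
    using cube unfolding sublist_tprefix_iff by metis
qed

lemma cube_is_cube_root:
  assumes "u \<noteq> []" "sublist (u @ u @ u) (tprefix (trib m))"
  shows "u \<in> cube_root ` cube_index m"
proof -
  have "length (u @ u @ u) = 3 * length u"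
    by simp
  then obtain i where i: "i + 3 * length u \<le> trib m" "u @ u @ u = tfactor i (3 * length u)"
    using assms(2) unfolding sublist_tprefix_iff by metis
  then have u: "u = tfactor i (length u)" and per: "period_on i (length u) (2 * length u)"
    using cube_tfactor_iff by metis+
  obtain k r where k: "length u = trib k" "r + 2 * trib k \<le> run_length k" "run_start k + r \<le> i"
    and root: "tfactor i (length u) = tfactor (run_start k + r) (length u)"
    using cube_in_run[OF per] assms(1) by blast
  have "3 \<le> k"
    using run_length_small[of k] k(2) by linarith
  have "trib (k + 3) < trib m"
    using i(1) k run_start_add_trib[of k] trib_pos[of k] by simp
  then have "k + 4 \<le> m"
    using strict_mono_trib by (simp add: strict_mono_less)
  with \<open>3 \<le> k\<close> k(2) have "(k, r) \<in> cube_index m"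
    by (simp add: mem_cube_index_iff)
  moreover have "u = cube_root (k, r)"
    using u root k(1) by simp
  ultimately show ?thesis
    by blast
qed

lemma cube_words_eq_image:
  "{w. w \<noteq> [] \<and> sublist (w @ w @ w) (tprefix (trib m))} = cube_root ` cube_index m"
proof (intro equalityI subsetI)
  fix w
  assume "w \<in> cube_root ` cube_index m"
  then obtain k r where kr: "(k, r) \<in> cube_index m" and w: "w = cube_root (k, r)"
    by auto
  then have "length w = trib k"
    by simp
  then have "w \<noteq> []"
    using trib_pos[of k] by auto
  with kr w show "w \<in> {w. w \<noteq> [] \<and> sublist (w @ w @ w) (tprefix (trib m))}"
    using cube_occurs_in_prefix by simp
qed (use cube_is_cube_root in blast)

lemma inj_on_cube_root: "inj_on cube_root (cube_index m)"
proof (rule inj_onI)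
  fix x y
  assume "x \<in> cube_index m" "y \<in> cube_index m" and eq: "cube_root x = cube_root y"
  moreover obtain k r k' r' where xy: "x = (k, r)" "y = (k', r')"
    by fastforce
  ultimately have k: "3 \<le> k" "r + 2 * trib k \<le> run_length k" "r' + 2 * trib k' \<le> run_length k'"
    by (simp_all add: mem_cube_index_iff)
  have "trib k = trib k'"
    using arg_cong[OF eq, of length] xy by simp
  then have "k = k'"
    using strict_mono_trib strict_mono_eq by blast
  with eq xy k cube_roots_distinct[of k r r'] cube_roots_distinct[of k r' r] show "x = y"
    by (cases r r' rule: linorder_cases) auto
qed

lemma cube_count_trib: "cube_count (trib m) = (\<Sum>k = 3..<m - 3. run_length k - 2 * trib k + 1)"
proof -
  have "cube_count (trib m) = card (cube_index m)"
    unfolding cube_count_def cube_words_eq_image using inj_on_cube_root by (rule card_image)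
  then show ?thesis
    by (simp add: cube_index_def card_SigmaI)
qed

lemma cubes_of_period_eq: "2 * (run_length (j + 3) - 2 * trib (j + 3) + 1) + trib j + 1 = trib (j + 2)"
proof -
  have "2 * trib (j + 3) \<le> run_length (j + 3)"
    using run_length_bounds[of "j + 3"] by simp
  then obtain c where "run_length (j + 3) = 2 * trib (j + 3) + c"
    using le_Suc_ex by blast
  with run_length_closed_form[of j] show ?thesis
    by simp
qed

lemma sum_cubes_of_period:
  "2 * (\<Sum>k = 3..<M + 4. run_length k - 2 * trib k + 1) + (M + 7) = trib (M + 2) + trib (M + 1) + 3"
proof (induction M)
  case 0
  have "{3..<0 + 4} = {3::nat}"
    by auto
  then show ?case
    using cubes_of_period_eq[of 0] by (simp add: trib_values trib_Suc_values)
next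
  case (Suc M)
  have "Suc M + 4 = Suc (M + 4)" "Suc M + 2 = M + 3" "Suc M + 1 = M + 2" "M + 1 + 3 = M + 4"
    "M + 1 + 2 = M + 3"
    by simp_all
  with Suc.IH cubes_of_period_eq[of "M + 1"] show ?case
    by (simp only: sum.atLeastLessThan_Suc[where g = "\<lambda>k. run_length k - 2 * trib k + 1"]) simp
qed

theorem theorem5p2:
  shows "(\<forall>m. m \<le> 6 \<longrightarrow> cube_count (trib m) = 0) \<and>
         (\<forall>m. m \<ge> 7 \<longrightarrow>
            real (cube_count (trib m)) =
              (real (trib (m - 5)) + real (trib (m - 6)) - real m + 3) / 2)"
proof (intro conjI allI impI)
  fix m :: nat
  assume "m \<le> 6"
  then show "cube_count (trib m) = 0"
    by (simp add: cube_count_trib)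
next
  fix m :: nat
  assume "7 \<le> m"
  then obtain M where M: "m = M + 7"
    by (metis add.commute le_Suc_ex)
  then have "m - 3 = M + 4" "m - 5 = M + 2" "m - 6 = M + 1"
    by simp_all
  then have "2 * cube_count (trib m) + m = trib (m - 5) + trib (m - 6) + 3"
    unfolding cube_count_trib using sum_cubes_of_period[of M] M by (simp only:)
  from arg_cong[where f = real, OF this]
  show "real (cube_count (trib m)) = (real (trib (m - 5)) + real (trib (m - 6)) - real m + 3) / 2"
    by simp
qed

end
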